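(* Let $\mu,P$ be Borel probability measures on $\mathbb{R}^d$ absolutely continuous w.r.t. Lebesgue measure, and let $u\in\mathbb{R}^d$ with $\mathrm{TD}(u;\mu)>0$. Then for every $\varepsilon\in[0,\mathrm{TD}(u;\mu))$ there exists $R>0$ such that $$\{x\in\partial\varphi_{\mu\to\nu}(u):\ \varphi_{\mu\to\nu}\in\Gamma_\varepsilon(P)\}\subset R\,\mathbb{B}.$$
   Context: $\mathbb{B}=\{x:\|x\|\leq1\}$; $\mathrm{TD}(u;\mu)=\min_{v\in\mathcal{S}^{d-1}}\mu(\{z:\langle v,z-u\rangle\geq0\})$; $\partial\psi(u)=\{x:\psi(z)\geq\psi(u)+\langle x,z-u\rangle\ \forall z\}$. $\mathcal{Q}_\varepsilon(P)=\{P+\varepsilon(Q-P):Q\text{ a Borel probability measure}\}\cap\{\text{probability measures absolutely continuous w.r.t. Lebesgue}\}$, and $\Gamma_\varepsilon(P)$ is the set of lower semicontinuous convex functions $\varphi_{\mu\to\nu}$ whose gradient pushes $\mu$ forward to some $\nu\in\mathcal{Q}_\varepsilon(P)$. *)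

theory Defs
  imports "HOL-Probability.Probability"
begin

definition ac_prob :: "'a::euclidean_space measure \<Rightarrow> bool" where
  "ac_prob M \<longleftrightarrow> prob_space M \<and> sets M = sets borel \<and> absolutely_continuous lborel M"

definition tukey_depth :: "'a::euclidean_space \<Rightarrow> 'a measure \<Rightarrow> real" where
  "tukey_depth u M = (INF v \<in> sphere 0 1. measure M {z. inner v (z - u) \<ge> 0})"

definition subdiff :: "('a::euclidean_space \<Rightarrow> ereal) \<Rightarrow> 'a \<Rightarrow> 'a set" where
  "subdiff \<psi> u = {x. \<forall>z. \<psi> z \<ge> \<psi> u + ereal (inner x (z - u))}"

definition lsc_convex :: "('a::euclidean_space \<Rightarrow> ereal) \<Rightarrow> bool" where
  "lsc_convex \<phi> \<longleftrightarrow>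
     (\<forall>x. \<phi> x \<noteq> -\<infinity>) \<and>
     (\<forall>x y t. 0 \<le> t \<and> t \<le> 1 \<longrightarrow>
        \<phi> ((1 - t) *\<^sub>R x + t *\<^sub>R y) \<le> ereal (1 - t) * \<phi> x + ereal t * \<phi> y) \<and>
     (\<forall>x c. c < \<phi> x \<longrightarrow> eventually (\<lambda>y. c < \<phi> y) (at x))"

definition grad_pushes :: "'a::euclidean_space measure \<Rightarrow> ('a \<Rightarrow> ereal) \<Rightarrow> 'a measure \<Rightarrow> bool" where
  "grad_pushes \<mu> \<phi> \<nu> \<longleftrightarrow>
     (\<exists>g \<in> borel_measurable \<mu>.
        (AE x in \<mu>. \<exists>e>0. (\<forall>y\<in>ball x e. \<bar>\<phi> y\<bar> \<noteq> \<infinity>) \<and>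
            ((\<lambda>y. real_of_ereal (\<phi> y)) has_derivative (\<lambda>h. inner (g x) h)) (at x))
        \<and> distr \<mu> borel g = \<nu>)"

definition Q_eps :: "real \<Rightarrow> 'a::euclidean_space measure \<Rightarrow> 'a measure set" where
  "Q_eps \<epsilon> P = {\<nu>. prob_space \<nu> \<and> sets \<nu> = sets borel \<and> absolutely_continuous lborel \<nu> \<and>
     (\<exists>Q. prob_space Q \<and> sets Q = sets borel \<and>
        (\<forall>A\<in>sets borel. measure \<nu> A = measure P A + \<epsilon> * (measure Q A - measure P A)))}"

definition Gamma_eps :: "'a::euclidean_space measure \<Rightarrow> real \<Rightarrow> 'a measure \<Rightarrow> ('a \<Rightarrow> ereal) set" where
  "Gamma_eps \<mu> \<epsilon> P = {\<phi>. lsc_convex \<phi> \<and> (\<exists>\<nu>\<in>Q_eps \<epsilon> P. grad_pushes \<mu> \<phi> \<nu>)}"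

end

(* If x is a subgradient of the convex function phi at u and phi is differentiable at y, then
   <x, y - u> <= <grad phi y, y - u>.  Since TD(u; mu) > eps and hyperplanes are mu-null, every
   open half-space through u has mu-mass > eps + eta; compactness of the unit sphere makes this
   uniform on caps {y. <v, y - u> >= delta, |y - u| <= rho}.  On the cap in direction x / |x| the
   gradient therefore has norm >= |x| delta / rho, so nu = (grad phi)_# mu gives mass > eps + eta
   to {w. |w| >= |x| delta / rho}.  As nu <= P + eps and P is tight, |x| is bounded. *)

theory Submission
  imports Defs
begin

lemma lsc_convex_gradient_inequality:
  fixes \<phi> :: "'a::euclidean_space \<Rightarrow> ereal"
  assumes cvx: "lsc_convex \<phi>" and fu: "\<phi> u = ereal c" and fy: "\<phi> y = ereal a"
    and der: "((\<lambda>z. real_of_ereal (\<phi> z)) has_derivative (\<lambda>h. inner G h)) (at y)"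
  shows "inner G (u - y) \<le> c - a"
proof -
  define d where "d = u - y"
  define h where "h = (\<lambda>t::real. real_of_ereal (\<phi> (y + t *\<^sub>R d)))"
  have "((\<lambda>t::real. y + t *\<^sub>R d) has_derivative (\<lambda>t. t *\<^sub>R d)) (at 0)"
    by (auto intro!: derivative_eq_intros)
  from diff_chain_at[OF this, of "\<lambda>z. real_of_ereal (\<phi> z)" "inner G"] der
  have "(h has_derivative (\<lambda>t. t * inner G d)) (at 0)"
    by (simp add: h_def o_def)
  then have "(h has_field_derivative inner G d) (at 0 within {0<..})"
    unfolding has_field_derivative_def mult.commute[of "inner G d"]
    by (rule has_derivative_at_withinI)
  then have "((\<lambda>t. (h t - h 0) / (t - 0)) \<longlongrightarrow> inner G d) (at_right 0)"
    by (simp add: has_field_derivative_iff)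
  moreover have "eventually (\<lambda>t. (h t - h 0) / (t - 0) \<le> c - a) (at_right (0::real))"
    unfolding eventually_at_right_field
  proof (intro exI[of _ 1] conjI allI impI)
    fix t :: real assume t: "0 < t" "t < 1"
    have "\<phi> (y + t *\<^sub>R d) = \<phi> ((1 - t) *\<^sub>R y + t *\<^sub>R u)"
      by (simp add: d_def algebra_simps)
    also have "\<dots> \<le> ereal (1 - t) * \<phi> y + ereal t * \<phi> u"
      using cvx t unfolding lsc_convex_def by auto
    also have "\<dots> = ereal ((1 - t) * a + t * c)" using fy fu by simp
    finally have "h t \<le> (1 - t) * a + t * c"
      using cvx unfolding h_def lsc_convex_def by (cases "\<phi> (y + t *\<^sub>R d)") auto
    moreover have "h 0 = a" unfolding h_def using fy by simp
    ultimately show "(h t - h 0) / (t - 0) \<le> c - a"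
      using t by (simp add: divide_simps algebra_simps)
  qed simp
  ultimately have "inner G d \<le> c - a"
    by (rule tendsto_upperbound) simp
  then show ?thesis by (simp add: d_def)
qed

lemma subdiff_not_infinity:
  assumes "x \<in> subdiff \<phi> u" and "\<phi> z \<noteq> \<infinity>"
  shows "\<phi> u \<noteq> \<infinity>"
  using assms unfolding subdiff_def by force

lemma subdiff_inner_le_gradient:
  fixes \<phi> :: "'a::euclidean_space \<Rightarrow> ereal"
  assumes cvx: "lsc_convex \<phi>" and x: "x \<in> subdiff \<phi> u" and fy: "\<bar>\<phi> y\<bar> \<noteq> \<infinity>"
    and der: "((\<lambda>z. real_of_ereal (\<phi> z)) has_derivative (\<lambda>h. inner G h)) (at y)"
  shows "inner x (y - u) \<le> inner G (y - u)"
proof -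
  obtain a where a: "\<phi> y = ereal a" using fy by (cases "\<phi> y") auto
  have "\<phi> u \<noteq> \<infinity>" using subdiff_not_infinity[OF x, of y] a by simp
  moreover have "\<phi> u \<noteq> -\<infinity>" using cvx unfolding lsc_convex_def by auto
  ultimately obtain c where c: "\<phi> u = ereal c" by (cases "\<phi> u") auto
  have "\<phi> u + ereal (inner x (y - u)) \<le> \<phi> y" using x unfolding subdiff_def by blast
  then have "c + inner x (y - u) \<le> a" using a c by simp
  moreover have "inner G (u - y) \<le> c - a"
    by (rule lsc_convex_gradient_inequality[OF cvx c a der])
  moreover have "inner G (u - y) = - inner G (y - u)"
    by (simp add: inner_diff_right)
  ultimately show ?thesis by linarith
qed

definition halfspace_cap :: "'a::euclidean_space \<Rightarrow> 'a \<Rightarrow> real \<Rightarrow> real \<Rightarrow> 'a set" where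
  "halfspace_cap u v \<delta> \<rho> = {y. \<delta> \<le> inner v (y - u)} \<inter> cball u \<rho>"

lemma closed_halfspace_cap: "closed (halfspace_cap u v \<delta> \<rho>)"
  unfolding halfspace_cap_def
  by (intro closed_Int closed_cball closed_Collect_le continuous_intros)

lemma halfspace_cap_in_borel: "halfspace_cap u v \<delta> \<rho> \<in> sets borel"
  by (simp add: closed_halfspace_cap borel_closed)

lemma halfspace_cap_subset:
  assumes "\<delta>' + norm (v - w) * \<rho> \<le> \<delta>" and "\<rho> \<le> \<rho>'"
  shows "halfspace_cap u v \<delta> \<rho> \<subseteq> halfspace_cap u w \<delta>' \<rho>'"
proof
  fix y assume "y \<in> halfspace_cap u v \<delta> \<rho>"
  then have y: "\<delta> \<le> inner v (y - u)" "norm (y - u) \<le> \<rho>"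
    by (auto simp: halfspace_cap_def dist_norm norm_minus_commute)
  have "inner (v - w) (y - u) \<le> norm (v - w) * norm (y - u)"
    by (rule norm_cauchy_schwarz)
  also have "\<dots> \<le> norm (v - w) * \<rho>"
    using y(2) by (simp add: mult_left_mono)
  finally have "\<delta>' \<le> inner w (y - u)"
    using y(1) assms(1) by (simp add: inner_diff_left)
  then show "y \<in> halfspace_cap u w \<delta>' \<rho>'"
    using y(2) assms(2) by (simp add: halfspace_cap_def dist_norm norm_minus_commute)
qed

lemma incseq_halfspace_cap: "incseq (\<lambda>n. halfspace_cap u v (1 / Suc n) (Suc n))"
  by (intro incseq_SucI halfspace_cap_subset) (simp_all add: frac_le)

lemma UN_halfspace_cap:
  "(\<Union>n. halfspace_cap u v (1 / Suc n) (Suc n)) = {y. 0 < inner v (y - u)}"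
proof (intro equalityI subsetI)
  fix y assume "y \<in> (\<Union>n. halfspace_cap u v (1 / Suc n) (Suc n))"
  then obtain n where "1 / Suc n \<le> inner v (y - u)"
    by (auto simp: halfspace_cap_def)
  moreover have "0 < 1 / real (Suc n)" by simp
  ultimately have "0 < inner v (y - u)" by linarith
  then show "y \<in> {y. 0 < inner v (y - u)}" by simp
next
  fix y assume "y \<in> {y. 0 < inner v (y - u)}"
  then obtain n1 where n1: "inverse (Suc n1) < inner v (y - u)"
    using reals_Archimedean by auto
  obtain n2 where n2: "dist u y \<le> real n2"
    using real_arch_simple by blast
  have "y \<in> halfspace_cap u v (1 / Suc n1) (Suc n2)"
    using n1 n2 by (simp add: halfspace_cap_def inverse_eq_divide)
  also have "\<dots> \<subseteq> halfspace_cap u v (1 / Suc (max n1 n2)) (Suc (max n1 n2))"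
    by (rule halfspace_cap_subset) (simp_all add: frac_le)
  finally show "y \<in> (\<Union>n. halfspace_cap u v (1 / Suc n) (Suc n))" by blast
qed

lemma halfspace_cap_measure_gt:
  fixes M :: "'a::euclidean_space measure"
  assumes "finite_measure M" and "sets M = sets borel"
    and "c < measure M {y. 0 < inner v (y - u)}"
  shows "\<exists>n. c < measure M (halfspace_cap u v (1 / Suc n) (Suc n))"
proof -
  interpret finite_measure M by fact
  have "range (\<lambda>n. halfspace_cap u v (1 / Suc n) (Suc n)) \<subseteq> sets M"
    using assms(2) halfspace_cap_in_borel by auto
  from finite_Lim_measure_incseq[OF this incseq_halfspace_cap]
  have "(\<lambda>n. measure M (halfspace_cap u v (1 / Suc n) (Suc n)))
          \<longlonglongrightarrow> measure M {y. 0 < inner v (y - u)}"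
    by (simp only: UN_halfspace_cap)
  from order_tendstoD(1)[OF this assms(3)] show ?thesis
    by (auto simp: eventually_sequentially)
qed

text \<open>Each direction has its own truncation level; a finite subcover of the compact unit
  sphere by balls on which that level still works yields a common one.\<close>

lemma uniform_halfspace_cap_measure_gt:
  fixes M :: "'a::euclidean_space measure"
  assumes "finite_measure M" and "sets M = sets borel"
    and "\<And>v. v \<in> sphere 0 1 \<Longrightarrow> c < measure M {y. 0 < inner v (y - u)}"
  shows "\<exists>\<delta>>0. \<exists>\<rho>>0. \<forall>w\<in>sphere 0 1. c < measure M (halfspace_cap u w \<delta> \<rho>)"
proof -
  interpret finite_measure M by fact
  obtain N where N: "\<And>v. v \<in> sphere 0 1 \<Longrightarrow>
      c < measure M (halfspace_cap u v (1 / Suc (N v)) (Suc (N v)))"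
    using halfspace_cap_measure_gt[OF assms] by metis
  define rad where "rad v = 1 / (2 * (real (Suc (N v)))\<^sup>2)" for v :: 'a
  have "sphere 0 1 \<subseteq> (\<Union>v\<in>sphere 0 1. ball v (rad v))"
    by (force simp: rad_def)
  then obtain F where F: "F \<subseteq> sphere 0 1" "finite F" "sphere 0 1 \<subseteq> (\<Union>v\<in>F. ball v (rad v))"
    using compactE_image[of "sphere 0 1" "sphere 0 1" "\<lambda>v. ball v (rad v)"] by auto
  define K where "K = Max (N ` F)"
  have "c < measure M (halfspace_cap u w (1 / (2 * Suc K)) (Suc K))"
    if w: "w \<in> sphere 0 1" for w
  proof -
    obtain v where v: "v \<in> F" "dist v w < rad v" using F(3) w by auto
    define s where "s = real (Suc (N v))"
    have "N v \<le> K" using v(1) F(2) by (simp add: K_def)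
    then have "1 / (2 * Suc K) \<le> 1 / (2 * s)" by (simp add: s_def frac_le)
    moreover have "norm (v - w) * s \<le> rad v * s"
      using v(2) by (simp add: s_def dist_norm less_imp_le)
    moreover have "rad v * s = 1 / (2 * s)"
      by (simp add: rad_def s_def power2_eq_square)
    ultimately have "1 / (2 * Suc K) + norm (v - w) * s \<le> 1 / s" by simp
    then have "halfspace_cap u v (1 / s) s \<subseteq> halfspace_cap u w (1 / (2 * Suc K)) (Suc K)"
      using \<open>N v \<le> K\<close> by (intro halfspace_cap_subset) (simp_all add: s_def)
    then have "measure M (halfspace_cap u v (1 / s) s)
        \<le> measure M (halfspace_cap u w (1 / (2 * Suc K)) (Suc K))"
      using assms(2) halfspace_cap_in_borel by (intro finite_measure_mono) auto
    then show ?thesis using N[of v] v(1) F(1) by (auto simp: s_def)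
  qed
  then show ?thesis
    by (intro exI[of _ "1 / (2 * Suc K)"] conjI exI[of _ "real (Suc K)"] ballI) auto
qed

lemma hyperplane_in_null_sets:
  fixes M :: "'a::euclidean_space measure"
  assumes "absolutely_continuous lborel M" and "v \<noteq> 0"
  shows "{y. inner v y = c} \<in> null_sets M"
proof -
  have "{y. inner v y = c} \<in> null_sets lebesgue"
    using negligible_hyperplane[of v c] assms(2) by (simp add: negligible_iff_null_sets)
  then have "{y. inner v y = c} \<in> null_sets lborel"
    by (simp add: null_sets_completion_iff closed_hyperplane)
  then show ?thesis
    using assms(1) unfolding absolutely_continuous_def by blast
qed

lemma tukey_depth_le_measure_halfspace:
  assumes "v \<in> sphere 0 1"
  shows "tukey_depth u M \<le> measure M {z. 0 \<le> inner v (z - u)}"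
  unfolding tukey_depth_def
  by (rule cINF_lower[OF _ assms]) (auto intro: bdd_belowI[where m = 0])

lemma tukey_depth_le_measure_open_halfspace:
  fixes M :: "'a::euclidean_space measure"
  assumes "sets M = sets borel" and "absolutely_continuous lborel M" and "v \<in> sphere 0 1"
  shows "tukey_depth u M \<le> measure M {y. 0 < inner v (y - u)}"
proof -
  have "{z. 0 \<le> inner v (z - u)} = {y. 0 < inner v (y - u)} \<union> {y. inner v y = inner v u}"
    by (auto simp: inner_diff_right)
  moreover have "open {y. 0 < inner v (y - u)}"
    by (intro open_Collect_less continuous_intros)
  then have "{y. 0 < inner v (y - u)} \<in> sets M"
    using assms(1) by simp
  moreover have "{y. inner v y = inner v u} \<in> null_sets M"
    using assms(2,3) by (intro hyperplane_in_null_sets) auto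
  ultimately show ?thesis
    using tukey_depth_le_measure_halfspace[OF assms(3), of u M] by (simp add: measure_Un_null_set)
qed

lemma finite_measure_norm_tail_small:
  fixes M :: "'a::real_normed_vector measure"
  assumes "finite_measure M" and "sets M = sets borel" and "0 < e"
  shows "\<exists>r>0. measure M {w. r \<le> norm w} < e"
proof -
  interpret finite_measure M by fact
  let ?B = "\<lambda>n::nat. {w::'a. real (Suc n) \<le> norm w}"
  have "range ?B \<subseteq> sets M"
    using assms(2) by (auto intro!: borel_closed closed_Collect_le continuous_intros)
  moreover have "decseq ?B"
    by (intro decseq_SucI) auto
  ultimately have "(\<lambda>n. measure M (?B n)) \<longlonglongrightarrow> measure M (\<Inter>n. ?B n)"
    by (rule finite_Lim_measure_decseq)
  moreover have "(\<Inter>n. ?B n) = {}"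
  proof (rule equals0I)
    fix w assume w: "w \<in> (\<Inter>n. ?B n)"
    obtain n where "norm w < real n" using reals_Archimedean2 by blast
    moreover have "real (Suc n) \<le> norm w" using w by blast
    ultimately show False by simp
  qed
  ultimately have "(\<lambda>n. measure M (?B n)) \<longlonglongrightarrow> 0" by simp
  from order_tendstoD(2)[OF this assms(3)] obtain n where "measure M (?B n) < e"
    by (auto simp: eventually_sequentially)
  then show ?thesis by (intro exI[of _ "real (Suc n)"]) auto
qed

lemma Q_eps_measure_le:
  assumes "\<nu> \<in> Q_eps \<epsilon> P" and "0 \<le> \<epsilon>" and "A \<in> sets borel"
  shows "measure \<nu> A \<le> measure P A + \<epsilon>"
proof -
  obtain Q where "prob_space Q"
    and \<nu>: "measure \<nu> A = measure P A + \<epsilon> * (measure Q A - measure P A)"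
    using assms(1,3) unfolding Q_eps_def by blast
  then have "measure Q A - measure P A \<le> 1"
    using prob_space.prob_le_1[of Q A] measure_nonneg[of P A] by linarith
  then show ?thesis
    unfolding \<nu> using assms(2) by (simp add: mult_left_le)
qed

lemma grad_pushes_measure_halfspace_cap_le:
  assumes "finite_measure \<mu>" and "lsc_convex \<phi>" and "grad_pushes \<mu> \<phi> \<nu>"
    and "x \<in> subdiff \<phi> u" and "0 < \<rho>" and "t * \<rho> \<le> norm x * \<delta>"
  shows "measure \<mu> (halfspace_cap u (sgn x) \<delta> \<rho>) \<le> measure \<nu> {w. t \<le> norm w}"
proof -
  interpret finite_measure \<mu> by fact
  obtain g where g: "g \<in> borel_measurable \<mu>" and \<nu>: "distr \<mu> borel g = \<nu>"
    and ae: "AE y in \<mu>. \<exists>e>0. (\<forall>z\<in>ball y e. \<bar>\<phi> z\<bar> \<noteq> \<infinity>) \<and>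
      ((\<lambda>z. real_of_ereal (\<phi> z)) has_derivative (\<lambda>h. inner (g y) h)) (at y)"
    using assms(3) unfolding grad_pushes_def by blast
  let ?S = "{w. t \<le> norm w}"
  have S: "?S \<in> sets borel"
    by (intro borel_closed closed_Collect_le continuous_intros)
  have "AE y in \<mu>. y \<in> halfspace_cap u (sgn x) \<delta> \<rho> \<longrightarrow> y \<in> g -` ?S \<inter> space \<mu>"
    using ae AE_space
  proof eventually_elim
    case (elim y)
    then obtain e where "e > 0" "\<forall>z\<in>ball y e. \<bar>\<phi> z\<bar> \<noteq> \<infinity>"
      and der: "((\<lambda>z. real_of_ereal (\<phi> z)) has_derivative (\<lambda>h. inner (g y) h)) (at y)"
      by blast
    then have fy: "\<bar>\<phi> y\<bar> \<noteq> \<infinity>" by auto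
    show ?case
    proof
      assume "y \<in> halfspace_cap u (sgn x) \<delta> \<rho>"
      then have y: "\<delta> \<le> inner (sgn x) (y - u)" "norm (y - u) \<le> \<rho>"
        by (auto simp: halfspace_cap_def dist_norm norm_minus_commute)
      have "t * \<rho> \<le> norm x * \<delta>" by fact
      also have "\<dots> \<le> norm x * inner (sgn x) (y - u)"
        using y(1) by (simp add: mult_left_mono)
      also have "\<dots> = inner x (y - u)"
        by (cases "x = 0") (simp_all add: sgn_div_norm)
      also have "\<dots> \<le> inner (g y) (y - u)"
        by (rule subdiff_inner_le_gradient[OF assms(2,4) fy der])
      also have "\<dots> \<le> norm (g y) * norm (y - u)"
        by (rule norm_cauchy_schwarz)
      also have "\<dots> \<le> norm (g y) * \<rho>"
        using y(2) by (simp add: mult_left_mono)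
      finally have "t \<le> norm (g y)" using assms(5) by simp
      then show "y \<in> g -` ?S \<inter> space \<mu>" using elim by simp
    qed
  qed
  then have "measure \<mu> (halfspace_cap u (sgn x) \<delta> \<rho>) \<le> measure \<mu> (g -` ?S \<inter> space \<mu>)"
    by (rule finite_measure_mono_AE) (rule measurable_sets[OF g S])
  also have "\<dots> = measure \<nu> ?S"
    using measure_distr[OF g S] \<nu> by simp
  finally show ?thesis .
qed

lemma Gamma_eps_subdiff_norm_le:
  assumes "finite_measure \<mu>" and "0 \<le> \<epsilon>" and "0 < \<delta>" and "0 < \<rho>" and "0 \<le> r"
    and cap: "\<And>w. w \<in> sphere 0 1 \<Longrightarrow> \<epsilon> + \<eta> < measure \<mu> (halfspace_cap u w \<delta> \<rho>)"
    and tail: "measure P {w. r \<le> norm w} < \<eta>"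
    and \<Gamma>: "\<phi> \<in> Gamma_eps \<mu> \<epsilon> P" and x: "x \<in> subdiff \<phi> u"
  shows "norm x \<le> r * \<rho> / \<delta>"
proof (rule ccontr)
  assume "\<not> norm x \<le> r * \<rho> / \<delta>"
  then have "x \<noteq> 0" and "r * \<rho> \<le> norm x * \<delta>"
    using assms(3-5) by (auto simp: field_simps)
  obtain \<nu> where \<phi>: "lsc_convex \<phi>" and \<nu>: "\<nu> \<in> Q_eps \<epsilon> P" "grad_pushes \<mu> \<phi> \<nu>"
    using \<Gamma> unfolding Gamma_eps_def by blast
  have tail_borel: "{w. r \<le> norm w} \<in> sets borel"
    by (intro borel_closed closed_Collect_le continuous_intros)
  have "\<epsilon> + \<eta> < measure \<mu> (halfspace_cap u (sgn x) \<delta> \<rho>)"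
    using cap \<open>x \<noteq> 0\<close> by (simp add: norm_sgn)
  also have "\<dots> \<le> measure \<nu> {w. r \<le> norm w}"
    by (rule grad_pushes_measure_halfspace_cap_le[OF assms(1) \<phi> \<nu>(2) x assms(4)]) fact
  also have "\<dots> \<le> measure P {w. r \<le> norm w} + \<epsilon>"
    by (rule Q_eps_measure_le[OF \<nu>(1) assms(2) tail_borel])
  finally show False using tail by simp
qed

theorem mainTheorem8:
  fixes \<mu> P :: "'a::euclidean_space measure" and u :: 'a and \<epsilon> :: real
  assumes "ac_prob \<mu>" and "ac_prob P"
    and "tukey_depth u \<mu> > 0"
    and "0 \<le> \<epsilon>" and "\<epsilon> < tukey_depth u \<mu>"
  shows "\<exists>R>0. {x. \<exists>\<phi>\<in>Gamma_eps \<mu> \<epsilon> P. x \<in> subdiff \<phi> u} \<subseteq> cball 0 R"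
proof -
  have \<mu>: "finite_measure \<mu>" "sets \<mu> = sets borel" "absolutely_continuous lborel \<mu>"
    and P: "finite_measure P" "sets P = sets borel"
    using assms(1,2) by (auto simp: ac_prob_def prob_space_def)
  define \<eta> where "\<eta> = (tukey_depth u \<mu> - \<epsilon>) / 2"
  have "0 < \<eta>" and "\<epsilon> + \<eta> < tukey_depth u \<mu>"
    using assms(5) by (simp_all add: \<eta>_def field_simps)
  then have "\<epsilon> + \<eta> < measure \<mu> {y. 0 < inner v (y - u)}" if "v \<in> sphere 0 1" for v
    using tukey_depth_le_measure_open_halfspace[OF \<mu>(2,3) that, of u] by linarith
  then obtain \<delta> \<rho> where "0 < \<delta>" "0 < \<rho>"
    and cap: "\<And>w. w \<in> sphere 0 1 \<Longrightarrow> \<epsilon> + \<eta> < measure \<mu> (halfspace_cap u w \<delta> \<rho>)"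
    using uniform_halfspace_cap_measure_gt[OF \<mu>(1,2)] by blast
  obtain r where "0 < r" and tail: "measure P {w. r \<le> norm w} < \<eta>"
    using finite_measure_norm_tail_small[OF P \<open>0 < \<eta>\<close>] by blast
  have "norm x \<le> r * \<rho> / \<delta>" if "\<phi> \<in> Gamma_eps \<mu> \<epsilon> P" "x \<in> subdiff \<phi> u" for \<phi> x
    using Gamma_eps_subdiff_norm_le[OF \<mu>(1) assms(4) \<open>0 < \<delta>\<close> \<open>0 < \<rho>\<close> _ cap tail that] \<open>0 < r\<close> by simp
  moreover have "0 < r * \<rho> / \<delta>" using \<open>0 < r\<close> \<open>0 < \<rho>\<close> \<open>0 < \<delta>\<close> by simp
  ultimately show ?thesis by (intro exI[of _ "r * \<rho> / \<delta>"]) auto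
qed

end
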